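(* Assume $FCA^\Delta$. Then there is an entangled set of reals, i.e. an uncountable $\mathcal{E}\subseteq\mathbb{R}$ which is $k$-entangled for every $k\in\omega$.
   Context: For a finite set $a$ of reals, $a(i)$ is its $i$-th element in increasing order. An uncountable $\mathcal{E}\subseteq\mathbb{R}$ is $k$-entangled if for every uncountable family $\mathcal{A}\subseteq[\mathcal{E}]^k$ of pairwise disjoint sets and every $t:k\to\{<,>\}$ there are distinct $a,b\in\mathcal{A}$ with $a(i)\ t(i)\ b(i)$ for all $i<k$. $FCA^\Delta$ is the statement: for every good type $\tau$ there is a fully $\Delta$-capturing construction scheme of type $\tau$ over $\omega_1$. Definitions: a type is a sequence $\tau=\langle m_k,n_{k+1},r_{k+1}\rangle_{k\in\omega}$ of natural numbers with $m_0=1$ and, for all $k$, $n_{k+1}\geq2$, $m_k>r_{k+1}$, $m_{k+1}=r_{k+1}+(m_k-r_{k+1})n_{k+1}$; good if every $r$ equals $r_k$ for infinitely many $k\geq1$. $A<B$ means every element of $A$ is below every element of $B$; $D(a)$ is the $a$-th element of a finite set of ordinals $D$. A construction scheme of type $\tau$ over a set of ordinals $Y$ is a family $\mathcal{F}$ of nonempty finite subsets of $Y$, cofinal among finite subsets of $Y$ under $\subseteq$, each of size $m_k$ for some $k$, with $\mathcal{F}_k=\{F\in\mathcal{F}:|F|=m_k\}$ satisfying: (i) for $E,F\in\mathcal{F}_k$, $E\cap F$ is an initial segment of both; (ii) every $F\in\mathcal{F}_{k+1}$ equals $F_0\cup\dots\cup F_{n_{k+1}-1}$ with $F_i\in\mathcal{F}_k$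 a $\Delta$-system with root $R(F)$, $|R(F)|=r_{k+1}$, $R(F)<F_0\setminus R(F)<\dots<F_{n_{k+1}-1}\setminus R(F)$. $\rho(\alpha,\beta)=\min\{k:\exists F\in\mathcal{F}_k\ \{\alpha,\beta\}\subseteq F\}$; $\lVert\alpha\rVert_k=|\{\xi<\alpha:\rho(\xi,\alpha)\leq k\}|$; $\Delta(\alpha,\beta)=\min\{k:\lVert\alpha\rVert_k\neq\lVert\beta\rVert_k\}$ ($\omega$ if none); for $k\geq1$, $\Xi_\alpha(k)=-1$ if $\alpha\in R(F)$, $=i$ if $\alpha\in F_i\setminus R(F)$, for any $F\in\mathcal{F}_k$ containing $\alpha$. A root-tail-tail $\Delta$-system is a sequence $\langle D_i\rangle_{i<n}$, $n\geq2$, of finite sets of ordinals of common size $m$ with pairwise intersections $R$, $R<D_i\setminus R$, $D_0\setminus R<\dots<D_{n-1}\setminus R$; $r=|R|$. It is fully $\Delta$-captured at level $l\geq1$ if $n=n_l$, (I) $\Xi_{D_i(a)}(l)=-1$ for $a<r$ and $=i$ for $a\geq r$ ($i<n$, $a<m$), and (II) $\Delta(D_i(a),D_j(a))=l$ for $i<j<n$, $r\leq a<m$. A scheme over $\omega_1$ is fully $\Delta$-capturing if for every uncountable family $\mathcal{S}$ of nonempty finite subsets of $\omega_1$ there are infinitely many $l$ for which some $n_l$ distinct members of $\mathcal{S}$, suitably enumerated, form a root-tail-tail $\Delta$-system fully $\Delta$-captured at level $l$. *)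

theory Defs
  imports Main "HOL-Library.Countable_Set" "HOL-Library.Extended_Nat"
begin

text \<open>omega_1 is modelled as a well-ordered type whose universe is uncountable
and all of whose proper initial segments are countable (i.e. of order type omega_1).\<close>

definition is_omega1 :: "'a::wellorder itself \<Rightarrow> bool" where
  "is_omega1 _ \<longleftrightarrow> uncountable (UNIV :: 'a set) \<and> (\<forall>x::'a. countable {y. y < x})"

definition setless :: "'a::linorder set \<Rightarrow> 'a set \<Rightarrow> bool" where
  "setless A B \<longleftrightarrow> (\<forall>x\<in>A. \<forall>y\<in>B. x < y)"

definition elt :: "'a::linorder set \<Rightarrow> nat \<Rightarrow> 'a" where
  "elt A i = sorted_list_of_set A ! i"

text \<open>Types <m_k, n_(k+1), r_(k+1)>; values n 0 and r 0 are irrelevant.\<close>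
definition is_type :: "(nat \<Rightarrow> nat) \<Rightarrow> (nat \<Rightarrow> nat) \<Rightarrow> (nat \<Rightarrow> nat) \<Rightarrow> bool" where
  "is_type m n r \<longleftrightarrow> m 0 = 1 \<and>
     (\<forall>k. n (Suc k) \<ge> 2 \<and> m k > r (Suc k) \<and>
          m (Suc k) = r (Suc k) + (m k - r (Suc k)) * n (Suc k))"

definition good_type :: "(nat \<Rightarrow> nat) \<Rightarrow> (nat \<Rightarrow> nat) \<Rightarrow> (nat \<Rightarrow> nat) \<Rightarrow> bool" where
  "good_type m n r \<longleftrightarrow> is_type m n r \<and> (\<forall>q. infinite {k. k \<ge> 1 \<and> r k = q})"

definition level :: "'a set set \<Rightarrow> (nat \<Rightarrow> nat) \<Rightarrow> nat \<Rightarrow> 'a set set" where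
  "level F m k = {A\<in>F. card A = m k}"

definition init_seg :: "'a::linorder set \<Rightarrow> 'a set \<Rightarrow> bool" where
  "init_seg S A \<longleftrightarrow> S \<subseteq> A \<and> (\<forall>x\<in>S. \<forall>y\<in>A. y < x \<longrightarrow> y \<in> S)"

definition decomp :: "'a::linorder set set \<Rightarrow> (nat \<Rightarrow> nat) \<Rightarrow> (nat \<Rightarrow> nat) \<Rightarrow> (nat \<Rightarrow> nat)
    \<Rightarrow> nat \<Rightarrow> 'a set \<Rightarrow> (nat \<Rightarrow> 'a set) \<Rightarrow> 'a set \<Rightarrow> bool" where
  "decomp F m n r k A Fs R \<longleftrightarrow>
     A = (\<Union>i<n (Suc k). Fs i) \<and>
     (\<forall>i<n (Suc k). Fs i \<in> level F m k) \<and>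
     card R = r (Suc k) \<and>
     (\<forall>i<n (Suc k). \<forall>j<n (Suc k). i \<noteq> j \<longrightarrow> Fs i \<inter> Fs j = R) \<and>
     setless R (Fs 0 - R) \<and>
     (\<forall>i. Suc i < n (Suc k) \<longrightarrow> setless (Fs i - R) (Fs (Suc i) - R))"

definition scheme :: "'a::linorder set set \<Rightarrow> (nat \<Rightarrow> nat) \<Rightarrow> (nat \<Rightarrow> nat) \<Rightarrow> (nat \<Rightarrow> nat)
    \<Rightarrow> 'a set \<Rightarrow> bool" where
  "scheme F m n r Y \<longleftrightarrow>
     (\<forall>A\<in>F. A \<noteq> {} \<and> finite A \<and> A \<subseteq> Y) \<and>
     (\<forall>B. finite B \<and> B \<subseteq> Y \<longrightarrow> (\<exists>A\<in>F. B \<subseteq> A)) \<and>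
     (\<forall>A\<in>F. \<exists>k. card A = m k) \<and>
     (\<forall>k. \<forall>A\<in>level F m k. \<forall>B\<in>level F m k. init_seg (A \<inter> B) A \<and> init_seg (A \<inter> B) B) \<and>
     (\<forall>k. \<forall>A\<in>level F m (Suc k). \<exists>Fs R. decomp F m n r k A Fs R)"

definition rho :: "'a set set \<Rightarrow> (nat \<Rightarrow> nat) \<Rightarrow> 'a \<Rightarrow> 'a \<Rightarrow> nat" where
  "rho F m \<alpha> \<beta> = (LEAST k. \<exists>A\<in>level F m k. {\<alpha>, \<beta>} \<subseteq> A)"

definition normk :: "'a::linorder set set \<Rightarrow> (nat \<Rightarrow> nat) \<Rightarrow> 'a \<Rightarrow> nat \<Rightarrow> nat" where
  "normk F m \<alpha> k = card {\<xi>. \<xi> < \<alpha> \<and> rho F m \<xi> \<alpha> \<le> k}"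

definition Delta :: "'a::linorder set set \<Rightarrow> (nat \<Rightarrow> nat) \<Rightarrow> 'a \<Rightarrow> 'a \<Rightarrow> enat" where
  "Delta F m \<alpha> \<beta> = (if \<exists>k. normk F m \<alpha> k \<noteq> normk F m \<beta> k
      then enat (LEAST k. normk F m \<alpha> k \<noteq> normk F m \<beta> k) else \<infinity>)"

text \<open>Xi_alpha(l) for l >= 1\<close>
definition Xi :: "'a::linorder set set \<Rightarrow> (nat \<Rightarrow> nat) \<Rightarrow> (nat \<Rightarrow> nat) \<Rightarrow> (nat \<Rightarrow> nat)
    \<Rightarrow> 'a \<Rightarrow> nat \<Rightarrow> int" where
  "Xi F m n r \<alpha> l = (THE v. \<exists>A\<in>level F m l. \<alpha> \<in> A \<and>
      (\<exists>Fs R. decomp F m n r (l - 1) A Fs R \<and>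
         ((\<alpha> \<in> R \<and> v = -1) \<or> (\<exists>i<n l. \<alpha> \<in> Fs i - R \<and> v = int i))))"

text \<open>root-tail-tail Delta-system D 0, ..., D (nn-1); its root is D 0 \<inter> D 1\<close>
definition rtt_system :: "(nat \<Rightarrow> 'a::linorder set) \<Rightarrow> nat \<Rightarrow> bool" where
  "rtt_system D nn \<longleftrightarrow> nn \<ge> 2 \<and>
     (\<exists>mm. \<forall>i<nn. finite (D i) \<and> card (D i) = mm) \<and>
     (\<exists>R. (\<forall>i<nn. \<forall>j<nn. i \<noteq> j \<longrightarrow> D i \<inter> D j = R) \<and>
          (\<forall>i<nn. setless R (D i - R)) \<and>
          (\<forall>i. Suc i < nn \<longrightarrow> setless (D i - R) (D (Suc i) - R)))"

definition fully_captured :: "'a::linorder set set \<Rightarrow> (nat \<Rightarrow> nat) \<Rightarrow> (nat \<Rightarrow> nat) \<Rightarrow> (nat \<Rightarrow> nat)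
    \<Rightarrow> (nat \<Rightarrow> 'a set) \<Rightarrow> nat \<Rightarrow> nat \<Rightarrow> bool" where
  "fully_captured F m n r D nn l \<longleftrightarrow>
     (let mm = card (D 0); rr = card (D 0 \<inter> D 1) in
      l \<ge> 1 \<and> nn = n l \<and>
      (\<forall>i<nn. \<forall>a<mm. Xi F m n r (elt (D i) a) l = (if a < rr then -1 else int i)) \<and>
      (\<forall>i j a. i < j \<and> j < nn \<and> rr \<le> a \<and> a < mm \<longrightarrow>
          Delta F m (elt (D i) a) (elt (D j) a) = enat l))"

definition fully_capturing :: "'a::linorder set set \<Rightarrow> (nat \<Rightarrow> nat) \<Rightarrow> (nat \<Rightarrow> nat) \<Rightarrow> (nat \<Rightarrow> nat)
    \<Rightarrow> bool" where
  "fully_capturing F m n r \<longleftrightarrow>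
     (\<forall>S :: 'a set set. uncountable S \<and> (\<forall>A\<in>S. A \<noteq> {} \<and> finite A) \<longrightarrow>
        infinite {l. \<exists>D. inj_on D {..<n l} \<and> D ` {..<n l} \<subseteq> S \<and>
                        rtt_system D (n l) \<and> fully_captured F m n r D (n l) l})"

definition FCA_Delta :: "'a::wellorder itself \<Rightarrow> bool" where
  "FCA_Delta _ \<longleftrightarrow> (\<forall>m n r. good_type m n r \<longrightarrow>
      (\<exists>F :: 'a set set. scheme F m n r UNIV \<and> fully_capturing F m n r))"

definition k_entangled :: "nat \<Rightarrow> real set \<Rightarrow> bool" where
  "k_entangled k E \<longleftrightarrow> uncountable E \<and>
     (\<forall>\<A>. \<A> \<subseteq> {a. a \<subseteq> E \<and> finite a \<and> card a = k} \<and> uncountable \<A> \<and> pairwise disjnt \<A> \<longrightarrow>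
        (\<forall>t :: nat \<Rightarrow> bool. \<exists>a\<in>\<A>. \<exists>b\<in>\<A>. a \<noteq> b \<and>
            (\<forall>i<k. if t i then elt a i < elt b i else elt a i > elt b i)))"

end

theory Submission
  imports Defs "HOL-Library.Nat_Bijection" Complex_Main
begin

text \<open>The norms \<open>\<parallel>\<alpha>\<parallel>\<^sub>k\<close>, \<open>k \<in> \<omega>\<close>, determine \<open>\<alpha>\<close>, and we read them as the digits of a real
  number \<open>embed \<alpha>\<close> with weights decreasing so fast that the first differing digit decides the
  order. We use a good type in which level \<open>l\<close> consists of blocks \<open>2s\<close> and \<open>2s+1\<close> for every
  subset \<open>s\<close> of \<open>m\<^bsub>l-1\<^esub>\<close>; the digit of a point at offset \<open>e\<close> in block \<open>2s+1\<close> is negated when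
  \<open>e \<notin> s\<close>. Given uncountably many disjoint \<open>k\<close>-sets, full \<open>\<Delta>\<close>-capturing puts \<open>n\<^sub>l\<close> of them into
  the blocks of one level \<open>l\<close>: corresponding points agree below \<open>l\<close> and have the same offset. The
  sets in blocks \<open>2s\<close> and \<open>2s+1\<close>, with \<open>s\<close> the offsets of the coordinates that should increase,
  then realise any prescribed pattern of inequalities.\<close>

lemma setless_trans:
  "setless A B \<Longrightarrow> setless B C \<Longrightarrow> B \<noteq> {} \<Longrightarrow> setless (A::'a::linorder set) C"
  unfolding setless_def by (meson ex_in_conv less_trans)

lemma elt_mem: "finite A \<Longrightarrow> j < card A \<Longrightarrow> elt A j \<in> A"
  unfolding elt_def using nth_mem[of j "sorted_list_of_set A"] by simp

lemma elt_inj: "finite A \<Longrightarrow> i < card A \<Longrightarrow> j < card A \<Longrightarrow> elt A i = elt A j \<Longrightarrow> i = j"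
  unfolding elt_def by (simp add: nth_eq_iff_index_eq)

lemma elt_surj: "finite A \<Longrightarrow> x \<in> A \<Longrightarrow> \<exists>j<card A. elt A j = x"
  unfolding elt_def using in_set_conv_nth[of x "sorted_list_of_set A"] by simp

lemma elt_image_perm:
  assumes f: "inj f" and A: "finite A"
  obtains \<pi> where "\<pi> ` {..<card A} = {..<card A}" "\<And>j. j < card A \<Longrightarrow> elt (f ` A) (\<pi> j) = f (elt A j)"
proof -
  have cfA: "card (f ` A) = card A" using f by (simp add: card_image inj_on_subset)
  have "\<forall>j\<in>{..<card A}. \<exists>i. i < card A \<and> elt (f ` A) i = f (elt A j)"
    using elt_surj[of "f ` A"] elt_mem[OF A] A cfA by auto
  then obtain \<pi> where \<pi>: "\<And>j. j \<in> {..<card A} \<Longrightarrow> \<pi> j < card A \<and> elt (f ` A) (\<pi> j) = f (elt A j)"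
    by (rule bchoice[THEN exE]) blast
  have "inj_on \<pi> {..<card A}"
  proof (rule inj_onI)
    fix i j assume ij: "i \<in> {..<card A}" "j \<in> {..<card A}" "\<pi> i = \<pi> j"
    then have "f (elt A i) = f (elt A j)" using \<pi> by metis
    then show "i = j" using elt_inj[OF A] f ij by (simp add: inj_eq)
  qed
  then have "\<pi> ` {..<card A} = {..<card A}" using \<pi> by (intro endo_inj_surj) auto
  then show ?thesis using that \<pi> by blast
qed

lemma uncountable_fibre:
  fixes key :: "'a \<Rightarrow> 'b::countable"
  assumes "uncountable A"
  obtains \<kappa> where "uncountable {a\<in>A. key a = \<kappa>}"
proof -
  have "A = (\<Union>\<kappa>. {a\<in>A. key a = \<kappa>})" by auto
  moreover have "countable (\<Union>\<kappa>. {a\<in>A. key a = \<kappa>})" if "\<And>\<kappa>. countable {a\<in>A. key a = \<kappa>}"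
    using that by (intro countable_UN) auto
  ultimately show ?thesis using assms that by (metis (no_types, lifting))
qed

lemma uncountable_vimage_family:
  assumes unc: "uncountable \<A>" and range: "\<And>a. a \<in> \<A> \<Longrightarrow> a \<subseteq> range f"
  shows "uncountable ((\<lambda>a. f -` a) ` \<A>)"
proof -
  have "inj_on (\<lambda>a. f -` a) \<A>"
  proof (rule inj_onI)
    fix a b assume ab: "a \<in> \<A>" "b \<in> \<A>" "f -` a = f -` b"
    then have "f ` (f -` a) = f ` (f -` b)" by simp
    then show "a = b" using range[OF ab(1)] range[OF ab(2)] by (simp add: image_vimage_eq Int_absorb2)
  qed
  then show ?thesis using unc countable_image_inj_on by blast
qed

lemma pairwise_disjnt_vimage_family:
  assumes "pairwise disjnt \<A>"
  shows "pairwise disjnt ((\<lambda>a. f -` a) ` \<A>)"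
proof (rule pairwiseI)
  fix A B assume "A \<in> (\<lambda>a. f -` a) ` \<A>" "B \<in> (\<lambda>a. f -` a) ` \<A>" "A \<noteq> B"
  then obtain a b where ab: "a \<in> \<A>" "b \<in> \<A>" "a \<noteq> b" "A = f -` a" "B = f -` b" by blast
  then have "a \<inter> b = {}" using assms unfolding pairwise_def disjnt_def by blast
  then show "disjnt A B" unfolding ab(4,5) disjnt_def vimage_Int[symmetric] by simp
qed

lemma uncountable_family_card_pos:
  assumes "uncountable \<A>" "\<And>a. a \<in> \<A> \<Longrightarrow> finite a \<and> card a = k"
  shows "k > 0"
proof (rule ccontr)
  assume "\<not> k > 0"
  then have "\<A> \<subseteq> {{}}" using assms(2) card_0_eq by blast
  then show False using assms(1) countable_subset[of \<A> "{{}}"] by simp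
qed

locale construction_scheme =
  fixes F :: "'a::linorder set set" and m n r :: "nat \<Rightarrow> nat"
  assumes scheme: "scheme F m n r UNIV" and type: "is_type m n r"
    and infinite_UNIV: "infinite (UNIV::'a set)"
begin

lemma type_facts:
  "n (Suc k) \<ge> 2" "m k > r (Suc k)" "m (Suc k) = r (Suc k) + (m k - r (Suc k)) * n (Suc k)"
  using type unfolding is_type_def by auto

lemma m_less_m_Suc: "m k < m (Suc k)"
proof -
  have "(m k - r (Suc k)) * 2 \<le> (m k - r (Suc k)) * n (Suc k)"
    using type_facts(1) by (rule mult_le_mono2)
  then show ?thesis using type_facts(2,3)[of k] by linarith
qed

lemma strict_mono_m: "strict_mono m"
  by (simp add: m_less_m_Suc strict_mono_Suc_iff)

lemma levelD: "A \<in> level F m k \<Longrightarrow> A \<in> F \<and> finite A \<and> card A = m k"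
  using scheme unfolding scheme_def level_def by auto

lemma level_init_seg: "A \<in> level F m k \<Longrightarrow> B \<in> level F m k \<Longrightarrow> init_seg (A \<inter> B) A"
  using scheme unfolding scheme_def by blast

lemma level_Suc_decomp: "A \<in> level F m (Suc k) \<Longrightarrow> \<exists>Fs R. decomp F m n r k A Fs R"
  using scheme unfolding scheme_def by blast

lemma level_below:
  "A \<in> level F m k \<Longrightarrow> j \<le> k \<Longrightarrow> x \<in> A \<Longrightarrow> \<exists>C\<in>level F m j. x \<in> C \<and> C \<subseteq> A"
proof (induction k arbitrary: A)
  case (Suc k)
  show ?case
  proof (cases "j = Suc k")
    case False
    then have jk: "j \<le> k" using Suc by auto
    obtain Fs R where d: "decomp F m n r k A Fs R" using level_Suc_decomp Suc by blast
    then obtain i where i: "i < n (Suc k)" "x \<in> Fs i" using Suc.prems(3) unfolding decomp_def by auto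
    have "Fs i \<in> level F m k" "Fs i \<subseteq> A" using d i unfolding decomp_def by auto
    then show ?thesis using Suc.IH[of "Fs i"] jk i by blast
  qed (use Suc in auto)
qed auto

lemma level_large: "finite B \<Longrightarrow> \<exists>M\<ge>L. \<exists>G\<in>level F m M. B \<subseteq> G"
proof -
  assume fB: "finite B"
  obtain B0 :: "'a set" where B0: "finite B0" "card B0 = Suc (m L)"
    using infinite_arbitrarily_large[OF infinite_UNIV] by blast
  have "finite (B \<union> B0)" using fB B0 by auto
  then obtain A where A: "A \<in> F" "B \<union> B0 \<subseteq> A" using scheme unfolding scheme_def by blast
  obtain M where M: "A \<in> level F m M" using A scheme unfolding scheme_def level_def by auto
  have "card B0 \<le> card A" using A levelD[OF M] by (intro card_mono) auto
  then have "m L < m M" using levelD[OF M] B0 by simp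
  then have "L \<le> M" using strict_mono_less[OF strict_mono_m] by simp
  then show ?thesis using A M by blast
qed

lemma level_cover: "\<exists>E\<in>level F m L. x \<in> E"
proof -
  obtain M G where "M \<ge> L" "G \<in> level F m M" "{x} \<subseteq> G" using level_large[of "{x}" L] by auto
  then show ?thesis using level_below[of G M L x] by auto
qed

lemma rho_witness: "\<exists>C\<in>level F m (rho F m a b). {a, b} \<subseteq> C"
proof -
  obtain M G where "G \<in> level F m M" "{a, b} \<subseteq> G" using level_large[of "{a,b}" 0] by auto
  then have "\<exists>k. \<exists>C\<in>level F m k. {a, b} \<subseteq> C" by blast
  then show ?thesis unfolding rho_def by (rule LeastI_ex)
qed

lemma rho_le: "A \<in> level F m k \<Longrightarrow> {a, b} \<subseteq> A \<Longrightarrow> rho F m a b \<le> k"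
  unfolding rho_def by (rule Least_le) blast

lemma rho_commute: "rho F m a b = rho F m b a"
  unfolding rho_def by (simp add: insert_commute)

lemma normk_eq_card_below:
  assumes A: "A \<in> level F m k" and x: "x \<in> A"
  shows "normk F m x k = card {\<xi>\<in>A. \<xi> < x}"
proof -
  have "{\<xi>. \<xi> < x \<and> rho F m \<xi> x \<le> k} = {\<xi>\<in>A. \<xi> < x}"
  proof (intro set_eqI iffI)
    fix \<xi> assume "\<xi> \<in> {\<xi>. \<xi> < x \<and> rho F m \<xi> x \<le> k}"
    then have h: "\<xi> < x" "rho F m \<xi> x \<le> k" by auto
    obtain C where C: "C \<in> level F m (rho F m \<xi> x)" "{\<xi>, x} \<subseteq> C" using rho_witness by blast
    obtain C' where C': "C' \<in> level F m (rho F m \<xi> x)" "x \<in> C'" "C' \<subseteq> A"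
      using level_below[OF A h(2) x] by blast
    have "init_seg (C \<inter> C') C" using level_init_seg C C' by blast
    then have "\<xi> \<in> C \<inter> C'" using C C' h unfolding init_seg_def by blast
    then show "\<xi> \<in> {\<xi>\<in>A. \<xi> < x}" using C' h by auto
  next
    fix \<xi> assume "\<xi> \<in> {\<xi>\<in>A. \<xi> < x}"
    then show "\<xi> \<in> {\<xi>. \<xi> < x \<and> rho F m \<xi> x \<le> k}" using rho_le[OF A] x by auto
  qed
  then show ?thesis unfolding normk_def by simp
qed

lemma normk_less_m: "normk F m x k < m k"
proof -
  obtain E where E: "E \<in> level F m k" "x \<in> E" using level_cover by blast
  have "{\<xi>\<in>E. \<xi> < x} \<subset> E" using E by auto
  then have "card {\<xi>\<in>E. \<xi> < x} < card E" using levelD[OF E(1)] psubset_card_mono by blast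
  then show ?thesis using normk_eq_card_below[OF E] levelD[OF E(1)] by simp
qed

lemma level_common: "rho F m a b \<le> L \<Longrightarrow> a < b \<Longrightarrow> \<exists>E\<in>level F m L. a \<in> E \<and> b \<in> E"
proof -
  assume h: "rho F m a b \<le> L" "a < b"
  obtain C where C: "C \<in> level F m (rho F m a b)" "{a, b} \<subseteq> C" using rho_witness by blast
  obtain E where E: "E \<in> level F m L" "b \<in> E" using level_cover by blast
  obtain E' where E': "E' \<in> level F m (rho F m a b)" "b \<in> E'" "E' \<subseteq> E"
    using level_below[OF E(1) h(1) E(2)] by blast
  have "init_seg (C \<inter> E') C" using level_init_seg C E' by blast
  then have "a \<in> E'" using C E' h unfolding init_seg_def by blast
  then show ?thesis using E E' by blast
qed

lemma normk_less_of_rho_le: "rho F m a b \<le> L \<Longrightarrow> a < b \<Longrightarrow> normk F m a L < normk F m b L"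
proof -
  assume h: "rho F m a b \<le> L" "a < b"
  obtain E where E: "E \<in> level F m L" "a \<in> E" "b \<in> E" using level_common[OF h] by blast
  have "{\<xi>\<in>E. \<xi> < a} \<subset> {\<xi>\<in>E. \<xi> < b}" using E h by auto
  then have "card {\<xi>\<in>E. \<xi> < a} < card {\<xi>\<in>E. \<xi> < b}"
    using levelD[OF E(1)] by (intro psubset_card_mono) auto
  then show ?thesis using normk_eq_card_below[OF E(1) E(2)] normk_eq_card_below[OF E(1) E(3)] by simp
qed

lemma normk_inj_of_rho_le: "rho F m a b \<le> L \<Longrightarrow> a \<noteq> b \<Longrightarrow> normk F m a L \<noteq> normk F m b L"
proof (cases "a < b")
  case False
  assume "rho F m a b \<le> L" "a \<noteq> b"
  then have "b < a" "rho F m b a \<le> L" using False rho_commute by auto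
  then show ?thesis using normk_less_of_rho_le[of b a L] by simp
qed (simp add: normk_less_of_rho_le less_imp_neq)

lemma normk_separates: "a \<noteq> b \<Longrightarrow> \<exists>k. normk F m a k \<noteq> normk F m b k"
proof -
  assume ab: "a \<noteq> b"
  obtain M G where "G \<in> level F m M" "{a, b} \<subseteq> G" using level_large[of "{a,b}" 0] by auto
  then have "rho F m a b \<le> M" using rho_le by blast
  then show ?thesis using normk_inj_of_rho_le ab by blast
qed

lemma normk_agree_below_Delta:
  assumes D: "Delta F m \<alpha> \<beta> = enat l" and k: "k < l"
  shows "normk F m \<alpha> k = normk F m \<beta> k"
proof -
  have "(LEAST k. normk F m \<alpha> k \<noteq> normk F m \<beta> k) = l"
    using D unfolding Delta_def by (auto split: if_splits)
  then show ?thesis using not_less_Least[of k "\<lambda>k. normk F m \<alpha> k \<noteq> normk F m \<beta> k"] k by auto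
qed

context
  fixes k A Fs R
  assumes decomp: "decomp F m n r k A Fs R"
begin

lemma decomp_facts:
  "A = (\<Union>i<n (Suc k). Fs i)" "\<And>i. i < n (Suc k) \<Longrightarrow> Fs i \<in> level F m k"
  "card R = r (Suc k)" "\<And>i j. i < n (Suc k) \<Longrightarrow> j < n (Suc k) \<Longrightarrow> i \<noteq> j \<Longrightarrow> Fs i \<inter> Fs j = R"
  "setless R (Fs 0 - R)" "\<And>i. Suc i < n (Suc k) \<Longrightarrow> setless (Fs i - R) (Fs (Suc i) - R)"
  using decomp unfolding decomp_def by auto

lemma decomp_root_subset: "i < n (Suc k) \<Longrightarrow> R \<subseteq> Fs i"
proof -
  assume i: "i < n (Suc k)"
  define j where "j = (if i = 0 then 1 else 0::nat)"
  have "j < n (Suc k)" "j \<noteq> i" using type_facts(1)[of k] j_def by auto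
  then have "Fs i \<inter> Fs j = R" using decomp_facts(4) i by blast
  then show ?thesis by blast
qed

lemma decomp_part_finite: "i < n (Suc k) \<Longrightarrow> finite (Fs i) \<and> card (Fs i) = m k"
  using levelD decomp_facts(2) by blast

lemma finite_decomp_root: "finite R"
  using decomp_root_subset[of 0] decomp_part_finite[of 0] type_facts(1)[of k] finite_subset by auto

lemma card_decomp_tail: "i < n (Suc k) \<Longrightarrow> card (Fs i - R) = m k - r (Suc k)"
  using decomp_root_subset decomp_part_finite decomp_facts(3)
  by (simp add: card_Diff_subset finite_decomp_root)

lemma decomp_tail_nonempty: "i < n (Suc k) \<Longrightarrow> Fs i - R \<noteq> {}"
proof
  assume i: "i < n (Suc k)" and e: "Fs i - R = {}"
  have "card (Fs i - R) = 0" unfolding e by simp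
  with card_decomp_tail[OF i] type_facts(2)[of k] show False by simp
qed

lemma decomp_tails_ordered: "i < j \<Longrightarrow> j < n (Suc k) \<Longrightarrow> setless (Fs i - R) (Fs j - R)"
proof (induction j rule: less_induct)
  case (less j)
  then obtain j' where j: "j = Suc j'" by (cases j) auto
  show ?case
  proof (cases "i = j'")
    case False
    then have "setless (Fs i - R) (Fs j' - R)" using less j by simp
    then show ?thesis using decomp_facts(6)[of j'] decomp_tail_nonempty[of j'] less.prems j
      by (auto intro: setless_trans)
  qed (use decomp_facts(6) less.prems j in simp)
qed

lemma decomp_root_below_tail: "i < n (Suc k) \<Longrightarrow> setless R (Fs i - R)"
  using decomp_facts(5) decomp_tails_ordered[of 0 i] decomp_tail_nonempty[of 0]
  by (cases "i = 0") (auto intro: setless_trans)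

lemma decomp_cover: "x \<in> A \<Longrightarrow> \<exists>i<n (Suc k). x \<in> Fs i"
  using decomp_facts(1) by auto

lemma card_below_root: "\<alpha> \<in> R \<Longrightarrow> card {\<xi>\<in>A. \<xi> < \<alpha>} < r (Suc k)"
proof -
  assume a: "\<alpha> \<in> R"
  have "{\<xi>\<in>A. \<xi> < \<alpha>} \<subseteq> R - {\<alpha>}"
  proof
    fix \<xi> assume x: "\<xi> \<in> {\<xi>\<in>A. \<xi> < \<alpha>}"
    then obtain i where i: "i < n (Suc k)" "\<xi> \<in> Fs i" using decomp_cover by auto
    show "\<xi> \<in> R - {\<alpha>}"
    proof (rule ccontr)
      assume "\<xi> \<notin> R - {\<alpha>}"
      then have "\<xi> \<in> Fs i - R" using x i by auto
      then have "\<alpha> < \<xi>" using decomp_root_below_tail[OF i(1)] a unfolding setless_def by blast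
      then show False using x by auto
    qed
  qed
  then have "card {\<xi>\<in>A. \<xi> < \<alpha>} \<le> card (R - {\<alpha>})" using finite_decomp_root by (intro card_mono) auto
  also have "\<dots> < card R" by (rule card_Diff1_less[OF finite_decomp_root a])
  finally show ?thesis using decomp_facts(3) by simp
qed

lemma below_tail_eq:
  assumes i: "i < n (Suc k)" and a: "\<alpha> \<in> Fs i - R"
  shows "{\<xi>\<in>A. \<xi> < \<alpha>} = R \<union> ((\<Union>i'<i. Fs i' - R) \<union> {\<xi>\<in>Fs i - R. \<xi> < \<alpha>})"
proof (intro set_eqI iffI)
  fix \<xi> assume x: "\<xi> \<in> {\<xi>\<in>A. \<xi> < \<alpha>}"
  then obtain j where j: "j < n (Suc k)" "\<xi> \<in> Fs j" using decomp_cover by auto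
  show "\<xi> \<in> R \<union> ((\<Union>i'<i. Fs i' - R) \<union> {\<xi>\<in>Fs i - R. \<xi> < \<alpha>})"
  proof (cases "\<xi> \<in> R")
    case False
    have "\<not> i < j"
    proof
      assume "i < j"
      then have "\<alpha> < \<xi>" using decomp_tails_ordered[of i j] j a False unfolding setless_def by blast
      then show False using x less_asym by auto
    qed
    then show ?thesis using False j x by (cases "j = i") auto
  qed simp
next
  fix \<xi> assume x: "\<xi> \<in> R \<union> ((\<Union>i'<i. Fs i' - R) \<union> {\<xi>\<in>Fs i - R. \<xi> < \<alpha>})"
  have "\<xi> \<in> A" using x decomp_root_subset i decomp_facts(1) by auto
  moreover have "\<xi> < \<alpha>"
  proof -
    { assume "\<xi> \<in> R" then have ?thesis using decomp_root_below_tail[OF i] a unfolding setless_def by blast }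
    moreover
    { fix i' assume "i' < i" "\<xi> \<in> Fs i' - R"
      then have ?thesis using decomp_tails_ordered[of i' i] i a unfolding setless_def by blast }
    ultimately show ?thesis using x by auto
  qed
  ultimately show "\<xi> \<in> {\<xi>\<in>A. \<xi> < \<alpha>}" by simp
qed

lemma card_Union_tails: "i \<le> n (Suc k) \<Longrightarrow> card (\<Union>i'<i. Fs i' - R) = i * (m k - r (Suc k))"
proof -
  assume i: "i \<le> n (Suc k)"
  have disj: "(Fs a - R) \<inter> (Fs b - R) = {}" if "a < i" "b < i" "a \<noteq> b" for a b
    using decomp_facts(4)[of a b] i that by auto
  have "card (\<Union>i'<i. Fs i' - R) = (\<Sum>i'<i. card (Fs i' - R))"
    using decomp_part_finite i disj by (intro card_UN_disjoint) auto
  also have "\<dots> = (\<Sum>i'<i. m k - r (Suc k))" using card_decomp_tail i by simp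
  finally show ?thesis by simp
qed

lemma card_below_tail:
  assumes i: "i < n (Suc k)" and a: "\<alpha> \<in> Fs i - R"
  shows "r (Suc k) \<le> card {\<xi>\<in>Fs i. \<xi> < \<alpha>}"
    "card {\<xi>\<in>A. \<xi> < \<alpha>} = r (Suc k) + i * (m k - r (Suc k)) + (card {\<xi>\<in>Fs i. \<xi> < \<alpha>} - r (Suc k))"
proof -
  have Ri: "R \<subseteq> Fs i" using decomp_root_subset i by simp
  have e1: "{\<xi>\<in>Fs i. \<xi> < \<alpha>} = R \<union> {\<xi>\<in>Fs i - R. \<xi> < \<alpha>}"
    using Ri decomp_root_below_tail[OF i] a unfolding setless_def by auto
  have finFi: "finite (Fs i)" using decomp_part_finite i by simp
  have c1: "card {\<xi>\<in>Fs i. \<xi> < \<alpha>} = r (Suc k) + card {\<xi>\<in>Fs i - R. \<xi> < \<alpha>}"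
    unfolding e1 using decomp_facts(3) finite_decomp_root finFi by (subst card_Un_disjoint) auto
  then show "r (Suc k) \<le> card {\<xi>\<in>Fs i. \<xi> < \<alpha>}" by simp
  have disj: "(\<Union>i'<i. Fs i' - R) \<inter> {\<xi>\<in>Fs i - R. \<xi> < \<alpha>} = {}"
  proof (rule ccontr)
    assume "(\<Union>i'<i. Fs i' - R) \<inter> {\<xi>\<in>Fs i - R. \<xi> < \<alpha>} \<noteq> {}"
    then obtain x i' where x: "i' < i" "x \<in> Fs i'" "x \<notin> R" "x \<in> Fs i" by blast
    have "Fs i' \<inter> Fs i = R" using decomp_facts(4)[of i' i] i x(1) by simp
    then show False using x by blast
  qed
  have finU: "finite (\<Union>i'<i. Fs i' - R)" using decomp_part_finite i by auto
  have "card {\<xi>\<in>A. \<xi> < \<alpha>} = card R + card ((\<Union>i'<i. Fs i' - R) \<union> {\<xi>\<in>Fs i - R. \<xi> < \<alpha>})"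
    unfolding below_tail_eq[OF i a] using finite_decomp_root finU finFi by (subst card_Un_disjoint) auto
  also have "card ((\<Union>i'<i. Fs i' - R) \<union> {\<xi>\<in>Fs i - R. \<xi> < \<alpha>}) =
      card (\<Union>i'<i. Fs i' - R) + card {\<xi>\<in>Fs i - R. \<xi> < \<alpha>}"
    using finU finFi disj by (intro card_Un_disjoint) auto
  finally have "card {\<xi>\<in>A. \<xi> < \<alpha>} = card R + (card (\<Union>i'<i. Fs i' - R) + card {\<xi>\<in>Fs i - R. \<xi> < \<alpha>})" .
  then show "card {\<xi>\<in>A. \<xi> < \<alpha>} = r (Suc k) + i * (m k - r (Suc k)) + (card {\<xi>\<in>Fs i. \<xi> < \<alpha>} - r (Suc k))"
    using card_Union_tails[of i] i c1 decomp_facts(3) by simp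
qed

end

lemma normk_Suc_root:
  assumes A: "A \<in> level F m (Suc k)" and d: "decomp F m n r k A Fs R" and a: "\<alpha> \<in> R"
  shows "normk F m \<alpha> (Suc k) < r (Suc k)"
proof -
  have "0 < n (Suc k)" using type_facts(1)[of k] by simp
  then have "\<alpha> \<in> A" using decomp_root_subset[OF d] decomp_facts(1)[OF d] a by blast
  then show ?thesis using normk_eq_card_below[OF A] card_below_root[OF d a] by simp
qed

lemma normk_Suc_tail:
  assumes A: "A \<in> level F m (Suc k)" and d: "decomp F m n r k A Fs R"
    and i: "i < n (Suc k)" and a: "\<alpha> \<in> Fs i - R"
  shows "r (Suc k) \<le> normk F m \<alpha> k"
    "normk F m \<alpha> (Suc k) = r (Suc k) + i * (m k - r (Suc k)) + (normk F m \<alpha> k - r (Suc k))"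
proof -
  have "normk F m \<alpha> k = card {\<xi>\<in>Fs i. \<xi> < \<alpha>}"
    using normk_eq_card_below decomp_facts(2)[OF d i] a by blast
  moreover have "normk F m \<alpha> (Suc k) = card {\<xi>\<in>A. \<xi> < \<alpha>}"
    using normk_eq_card_below[OF A] a i decomp_facts(1)[OF d] by blast
  ultimately show "r (Suc k) \<le> normk F m \<alpha> k"
    "normk F m \<alpha> (Suc k) = r (Suc k) + i * (m k - r (Suc k)) + (normk F m \<alpha> k - r (Suc k))"
    using card_below_tail[OF d i a] by simp_all
qed

text \<open>The position of \<open>\<alpha>\<close> in a level \<open>k+1\<close> set, read in base \<open>m\<^sub>k - r\<^bsub>k+1\<^esub>\<close> after the root,
  gives the block of \<open>\<alpha>\<close>; in particular \<open>Xi\<close> does not depend on the choice of that set.\<close>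
lemma Xi_eq:
  "Xi F m n r \<alpha> (Suc k) = (if normk F m \<alpha> (Suc k) < r (Suc k) then -1
     else int ((normk F m \<alpha> (Suc k) - r (Suc k)) div (m k - r (Suc k))))" (is "_ = ?g")
proof -
  define P where "P v \<longleftrightarrow> (\<exists>A\<in>level F m (Suc k). \<alpha> \<in> A \<and>
      (\<exists>Fs R. decomp F m n r k A Fs R \<and>
         ((\<alpha> \<in> R \<and> v = -1) \<or> (\<exists>i<n (Suc k). \<alpha> \<in> Fs i - R \<and> v = int i))))" for v
  have d_pos: "m k - r (Suc k) > 0" using type_facts(2)[of k] by simp
  have P_imp: "v = ?g" if "P v" for v
  proof -
    obtain A Fs R where A: "A \<in> level F m (Suc k)" "\<alpha> \<in> A" "decomp F m n r k A Fs R"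
      and c: "(\<alpha> \<in> R \<and> v = -1) \<or> (\<exists>i<n (Suc k). \<alpha> \<in> Fs i - R \<and> v = int i)"
      using \<open>P v\<close> unfolding P_def by blast
    show ?thesis
    proof (cases "\<alpha> \<in> R \<and> v = -1")
      case True
      then show ?thesis using normk_Suc_root[OF A(1,3)] by simp
    next
      case False
      then obtain i where i: "i < n (Suc k)" "\<alpha> \<in> Fs i - R" "v = int i" using c by blast
      have "normk F m \<alpha> k - r (Suc k) < m k - r (Suc k)"
        using normk_Suc_tail(1)[OF A(1,3) i(1,2)] normk_less_m[of \<alpha> k] by simp
      then show ?thesis using normk_Suc_tail(2)[OF A(1,3) i(1,2)] i(3) d_pos by simp
    qed
  qed
  obtain E where E: "E \<in> level F m (Suc k)" "\<alpha> \<in> E" using level_cover by blast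
  obtain Fs R where d: "decomp F m n r k E Fs R" using level_Suc_decomp[OF E(1)] by blast
  obtain i where "i < n (Suc k)" "\<alpha> \<in> Fs i" using decomp_cover[OF d E(2)] by blast
  then have "\<exists>v. P v" unfolding P_def using E d by (cases "\<alpha> \<in> R") blast+
  then have "(THE v. P v) = ?g" using P_imp by (metis the_equality)
  then show ?thesis unfolding Xi_def P_def by simp
qed

lemma normk_Suc_of_Xi:
  assumes Xi: "Xi F m n r \<alpha> (Suc k) = int i"
  shows "r (Suc k) \<le> normk F m \<alpha> k"
    "normk F m \<alpha> (Suc k) = r (Suc k) + i * (m k - r (Suc k)) + (normk F m \<alpha> k - r (Suc k))"
proof -
  obtain E where E: "E \<in> level F m (Suc k)" "\<alpha> \<in> E" using level_cover by blast
  obtain Fs R where d: "decomp F m n r k E Fs R" using level_Suc_decomp[OF E(1)] by blast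
  obtain j where j: "j < n (Suc k)" "\<alpha> \<in> Fs j" using decomp_cover[OF d E(2)] by blast
  have "\<alpha> \<notin> R" using normk_Suc_root[OF E(1) d] Xi Xi_eq[of \<alpha> k] by auto
  then have aj: "\<alpha> \<in> Fs j - R" using j by simp
  have "normk F m \<alpha> k - r (Suc k) < m k - r (Suc k)"
    using normk_Suc_tail(1)[OF E(1) d j(1) aj] normk_less_m[of \<alpha> k] by simp
  moreover have "normk F m \<alpha> (Suc k) - r (Suc k) = (normk F m \<alpha> k - r (Suc k)) + j * (m k - r (Suc k))"
    using normk_Suc_tail[OF E(1) d j(1) aj] by simp
  ultimately have "(normk F m \<alpha> (Suc k) - r (Suc k)) div (m k - r (Suc k)) = j" by simp
  then have "i = j" using Xi Xi_eq[of \<alpha> k] normk_Suc_tail[OF E(1) d j(1) aj] by simp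
  then show "r (Suc k) \<le> normk F m \<alpha> k"
    "normk F m \<alpha> (Suc k) = r (Suc k) + i * (m k - r (Suc k)) + (normk F m \<alpha> k - r (Suc k))"
    using normk_Suc_tail[OF E(1) d j(1) aj] by simp_all
qed

lemma captured_column:
  assumes cap: "fully_captured F m n r D N (Suc l)" and disj: "D 0 \<inter> D 1 = {}"
    and i: "i < N" and j: "j < card (D 0)"
  shows "r (Suc l) \<le> normk F m (elt (D 0) j) l"
    "normk F m (elt (D i) j) (Suc l) =
       r (Suc l) + i * (m l - r (Suc l)) + (normk F m (elt (D 0) j) l - r (Suc l))"
proof -
  have Xi: "\<And>i. i < N \<Longrightarrow> Xi F m n r (elt (D i) j) (Suc l) = int i"
    and Delta: "\<And>i. 0 < i \<Longrightarrow> i < N \<Longrightarrow> Delta F m (elt (D 0) j) (elt (D i) j) = enat (Suc l)"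
    using cap j unfolding fully_captured_def Let_def disj by auto
  have "normk F m (elt (D i) j) l = normk F m (elt (D 0) j) l"
    using normk_agree_below_Delta[OF Delta, of i l] i by (cases "i = 0") auto
  then show "r (Suc l) \<le> normk F m (elt (D 0) j) l"
    "normk F m (elt (D i) j) (Suc l) =
       r (Suc l) + i * (m l - r (Suc l)) + (normk F m (elt (D 0) j) l - r (Suc l))"
    using normk_Suc_of_Xi[OF Xi[OF i]] by simp_all
qed

lemma captured_agree:
  assumes cap: "fully_captured F m n r D N l" and disj: "D 0 \<inter> D 1 = {}"
    and ii': "i < i'" "i' < N" and j: "j < card (D 0)" and k: "k < l"
  shows "normk F m (elt (D i) j) k = normk F m (elt (D i') j) k"
  using cap ii' j k unfolding fully_captured_def Let_def disj
  by (auto intro: normk_agree_below_Delta)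

lemma captured_in_family:
  assumes capt: "fully_capturing F m n r" and S: "uncountable S" "pairwise disjnt S"
    and nonempty: "\<And>A. A \<in> S \<Longrightarrow> A \<noteq> {} \<and> finite A"
  obtains l D where "s \<le> l" "\<And>i. i < n (Suc l) \<Longrightarrow> D i \<in> S"
    "\<And>i i'. i < n (Suc l) \<Longrightarrow> i' < n (Suc l) \<Longrightarrow> i \<noteq> i' \<Longrightarrow> D i \<inter> D i' = {}"
    "fully_captured F m n r D (n (Suc l)) (Suc l)"
proof -
  have "infinite {l. \<exists>D. inj_on D {..<n l} \<and> D ` {..<n l} \<subseteq> S \<and>
      rtt_system D (n l) \<and> fully_captured F m n r D (n l) l}"
    using capt[unfolded fully_capturing_def, rule_format, of S] S(1) nonempty by simp
  then obtain l' where "s < l'" and "l' \<in> {l. \<exists>D. inj_on D {..<n l} \<and> D ` {..<n l} \<subseteq> S \<and>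
      rtt_system D (n l) \<and> fully_captured F m n r D (n l) l}"
    unfolding infinite_nat_iff_unbounded by blast
  moreover obtain l where "l' = Suc l" using \<open>s < l'\<close> by (cases l') auto
  ultimately obtain D where l: "s \<le> l" and D: "inj_on D {..<n (Suc l)}" "D ` {..<n (Suc l)} \<subseteq> S"
    and cap: "fully_captured F m n r D (n (Suc l)) (Suc l)"
    by auto
  have "D i \<inter> D i' = {}" if "i < n (Suc l)" "i' < n (Suc l)" "i \<noteq> i'" for i i'
  proof -
    have "D i \<noteq> D i'" using inj_onD[OF D(1)] that by blast
    moreover have "D i \<in> S" "D i' \<in> S" using D(2) that by auto
    ultimately show ?thesis using S(2) unfolding pairwise_def disjnt_def by blast
  qed
  then show ?thesis using that l D(2) cap by blast
qed

lemma captured_offsets: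
  assumes cap: "fully_captured F m n r D (n (Suc l)) (Suc l)" and disj: "D 0 \<inter> D 1 = {}"
    and D0: "finite (D 0)" "card (D 0) = k"
    and bounded: "\<And>\<xi> \<eta>. \<xi> \<in> D 0 \<Longrightarrow> \<eta> \<in> D 0 \<Longrightarrow> rho F m \<xi> \<eta> \<le> l"
  obtains p where "inj_on p {..<k}" "\<And>j. j < k \<Longrightarrow> p j < m l - r (Suc l)"
    "\<And>i j. i < n (Suc l) \<Longrightarrow> j < k \<Longrightarrow>
      normk F m (elt (D i) j) (Suc l) = r (Suc l) + i * (m l - r (Suc l)) + p j"
proof -
  define p where "p j = normk F m (elt (D 0) j) l - r (Suc l)" for j
  have "0 < n (Suc l)" using type_facts(1)[of l] by simp
  have ge: "r (Suc l) \<le> normk F m (elt (D 0) j) l" if "j < k" for j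
    using captured_column(1)[OF cap disj \<open>0 < n (Suc l)\<close>] that D0(2) by simp
  have "inj_on p {..<k}"
  proof (rule inj_onI)
    fix j j' assume jj': "j \<in> {..<k}" "j' \<in> {..<k}" "p j = p j'"
    moreover have "r (Suc l) \<le> normk F m (elt (D 0) j) l" "r (Suc l) \<le> normk F m (elt (D 0) j') l"
      using ge jj'(1,2) by auto
    ultimately have "normk F m (elt (D 0) j) l = normk F m (elt (D 0) j') l" unfolding p_def by simp
    moreover have "elt (D 0) j \<in> D 0" "elt (D 0) j' \<in> D 0" using elt_mem D0 jj'(1,2) by auto
    ultimately have "elt (D 0) j = elt (D 0) j'" using normk_inj_of_rho_le bounded by blast
    then show "j = j'" using elt_inj[of "D 0" j j'] D0 jj'(1,2) by simp
  qed
  moreover have "p j < m l - r (Suc l)" if "j < k" for j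
    using normk_less_m[of "elt (D 0) j" l] ge[OF that] unfolding p_def by simp
  moreover have "normk F m (elt (D i) j) (Suc l) = r (Suc l) + i * (m l - r (Suc l)) + p j"
    if "i < n (Suc l)" "j < k" for i j
    using captured_column(2)[OF cap disj that(1)] that(2) D0(2) unfolding p_def by simp
  ultimately show ?thesis using that by blast
qed

end

text \<open>The type used for the entangled set: \<open>prod_decode\<close> lets every value of \<open>r\<close> recur, and
  \<open>n\<^bsub>k+1\<^esub> = 2 \<cdot> code({..<m\<^sub>k}) + 2\<close> provides the blocks \<open>2s\<close> and \<open>2s+1\<close> for every \<open>s \<subseteq> {..<m\<^sub>k}\<close>,
  coded by \<open>set_encode\<close>.\<close>

definition rT :: "nat \<Rightarrow> nat" where
  "rT k = (case k of 0 \<Rightarrow> 0 | Suc j \<Rightarrow> fst (prod_decode j))"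

fun mT :: "nat \<Rightarrow> nat" where
  "mT 0 = 1"
| "mT (Suc k) = rT (Suc k) + (mT k - rT (Suc k)) * (2 * set_encode {..<mT k} + 2)"

declare mT.simps(2)[simp del]

definition nT :: "nat \<Rightarrow> nat" where
  "nT k = (case k of 0 \<Rightarrow> 2 | Suc j \<Rightarrow> 2 * set_encode {..<mT j} + 2)"

lemma rT_Suc: "rT (Suc k) = fst (prod_decode k)"
  unfolding rT_def by simp

lemma nT_Suc: "nT (Suc k) = 2 * set_encode {..<mT k} + 2"
  unfolding nT_def by simp

lemma fst_prod_decode_le: "fst (prod_decode k) \<le> k"
  by (metis le_prod_encode_1 prod.collapse prod_decode_inverse)

lemma less_mT: "k < mT k"
proof (induction k)
  case (Suc k)
  have r: "rT (Suc k) < mT k" using Suc fst_prod_decode_le[of k] rT_Suc[of k] by simp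
  have "(mT k - rT (Suc k)) * 2 \<le> (mT k - rT (Suc k)) * (2 * set_encode {..<mT k} + 2)"
    by (rule mult_le_mono2) simp
  then show ?case using r Suc by (simp add: mT.simps(2))
qed simp

lemma is_type_T: "is_type mT nT rT"
  unfolding is_type_def using less_mT fst_prod_decode_le rT_Suc nT_Suc
  by (auto intro: le_less_trans simp: mT.simps(2))

lemma good_type_T: "good_type mT nT rT"
proof -
  have "infinite {k. k \<ge> 1 \<and> rT k = q}" for q
  proof
    assume fin: "finite {k. k \<ge> 1 \<and> rT k = q}"
    have "range (\<lambda>j. Suc (prod_encode (q, j))) \<subseteq> {k. k \<ge> 1 \<and> rT k = q}"
      using rT_Suc by auto
    moreover have "inj (\<lambda>j. Suc (prod_encode (q, j)))" by (auto simp: inj_def)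
    ultimately show False using fin finite_subset finite_imageD by (metis infinite_UNIV_nat)
  qed
  then show ?thesis unfolding good_type_def using is_type_T by simp
qed

lemma odd_block_fits: "T \<subseteq> {..<mT l} \<Longrightarrow> Suc (2 * set_encode T) < nT (Suc l)"
proof -
  assume "T \<subseteq> {..<mT l}"
  then have "set_encode T \<le> set_encode {..<mT l}"
    unfolding set_encode_def by (intro sum_mono2) auto
  then show ?thesis unfolding nT_Suc by simp
qed

text \<open>The factor \<open>8 (M (k+1) + 1)\<close> makes all digits \<open>|u j| \<le> M j\<close> with \<open>j > k\<close> together weigh
  less than one unit of digit \<open>k\<close>.\<close>

fun lex_weight :: "(nat \<Rightarrow> nat) \<Rightarrow> nat \<Rightarrow> real" where
  "lex_weight M 0 = 1"
| "lex_weight M (Suc k) = lex_weight M k / (8 * (real (M (Suc k)) + 1))"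

lemma lex_weight_pos: "lex_weight M k > 0"
proof (induction k)
  case (Suc k)
  have "8 * (real (M (Suc k)) + 1) > 0" by simp
  then show ?case using Suc by simp
qed simp

lemma lex_weight_Suc_le: "lex_weight M (Suc k) \<le> lex_weight M k / 8"
proof -
  have "8 \<le> 8 * (real (M (Suc k)) + 1)" by simp
  then show ?thesis using lex_weight_pos[of M k]
    by (simp only: lex_weight.simps) (rule divide_left_mono, auto)
qed

lemma lex_weight_decay: "lex_weight M (l + j) \<le> lex_weight M l * (1/8)^j"
proof (induction j)
  case (Suc j)
  have "lex_weight M (l + Suc j) \<le> lex_weight M (l + j) / 8" using lex_weight_Suc_le[of M "l + j"] by simp
  also have "\<dots> \<le> lex_weight M l * (1/8)^j / 8" using Suc by simp
  finally show ?case by simp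
qed simp

lemma lex_weight_digit_bound: "real (M (Suc k)) * lex_weight M (Suc k) \<le> lex_weight M k / 8"
proof -
  define c where "c = real (M (Suc k))"
  have "c \<ge> 0" unfolding c_def by simp
  have "c * lex_weight M (Suc k) = lex_weight M k / 8 * (c / (c + 1))" unfolding c_def by simp
  also have "\<dots> \<le> lex_weight M k / 8 * 1"
    using \<open>c \<ge> 0\<close> lex_weight_pos[of M k] by (intro mult_left_mono) auto
  finally show ?thesis unfolding c_def by simp
qed

lemma summable_lex_series:
  fixes u :: "nat \<Rightarrow> int"
  assumes u: "\<And>k. \<bar>u k\<bar> \<le> int (M k)"
  shows "summable (\<lambda>k. real_of_int (u k) * lex_weight M k)"
proof (rule summable_comparison_test')
  show "summable (\<lambda>n. (1/8::real)^n)" by (rule summable_geometric) simp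
  fix n :: nat assume "n \<ge> 1"
  then obtain j where j: "n = Suc j" by (cases n) auto
  have "norm (real_of_int (u n) * lex_weight M n) = \<bar>real_of_int (u n)\<bar> * lex_weight M n"
    using lex_weight_pos[of M n] by (simp add: abs_mult)
  also have "\<dots> \<le> real (M n) * lex_weight M n"
    using u[of n] lex_weight_pos[of M n] by (intro mult_right_mono) (auto simp flip: of_int_abs)
  also have "\<dots> \<le> lex_weight M j / 8" using lex_weight_digit_bound[of M j] j by simp
  also have "\<dots> \<le> (1/8)^j / 8" using lex_weight_decay[of M 0 j] by simp
  finally show "norm (real_of_int (u n) * lex_weight M n) \<le> (1/8)^n" using j by simp
qed

lemma lex_series_tail_bound:
  fixes u v :: "nat \<Rightarrow> int"
  assumes u: "\<And>k. \<bar>u k\<bar> \<le> int (M k)" and v: "\<And>k. \<bar>v k\<bar> \<le> int (M k)"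
  shows "\<bar>real_of_int (v (j + Suc l) - u (j + Suc l)) * lex_weight M (j + Suc l)\<bar>
    \<le> lex_weight M l / 4 * (1/8)^j"
proof -
  define k where "k = l + j"
  have "\<bar>v (Suc k) - u (Suc k)\<bar> \<le> 2 * int (M (Suc k))" using u[of "Suc k"] v[of "Suc k"] by simp
  then have "real_of_int \<bar>v (Suc k) - u (Suc k)\<bar> \<le> real_of_int (2 * int (M (Suc k)))"
    by (simp only: of_int_le_iff)
  then have a: "\<bar>real_of_int (v (Suc k) - u (Suc k))\<bar> \<le> 2 * real (M (Suc k))"
    by simp
  have "\<bar>real_of_int (v (Suc k) - u (Suc k)) * lex_weight M (Suc k)\<bar>
      = \<bar>real_of_int (v (Suc k) - u (Suc k))\<bar> * lex_weight M (Suc k)"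
    by (simp add: abs_mult lex_weight_pos less_imp_le)
  also have "\<dots> \<le> 2 * real (M (Suc k)) * lex_weight M (Suc k)"
    using a lex_weight_pos[of M "Suc k"] by (intro mult_right_mono) auto
  also have "\<dots> \<le> 2 * (lex_weight M k / 8)" using lex_weight_digit_bound[of M k] by linarith
  also have "\<dots> \<le> 2 * (lex_weight M l * (1/8)^j / 8)" using lex_weight_decay[of M l j] k_def by simp
  finally show ?thesis unfolding k_def by (simp add: add.commute)
qed

lemma summable_lex_series_diff:
  fixes u v :: "nat \<Rightarrow> int"
  assumes u: "\<And>k. \<bar>u k\<bar> \<le> int (M k)" and v: "\<And>k. \<bar>v k\<bar> \<le> int (M k)"
  shows "summable (\<lambda>k. real_of_int (v k - u k) * lex_weight M k)"
  using summable_diff[OF summable_lex_series[OF v] summable_lex_series[OF u]]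
  by (simp add: algebra_simps)

lemma lex_series_tail_ge:
  fixes u v :: "nat \<Rightarrow> int"
  assumes u: "\<And>k. \<bar>u k\<bar> \<le> int (M k)" and v: "\<And>k. \<bar>v k\<bar> \<le> int (M k)"
  shows "- (lex_weight M l / 4) * (8/7)
    \<le> (\<Sum>j. real_of_int (v (j + Suc l) - u (j + Suc l)) * lex_weight M (j + Suc l))"
proof -
  define h where "h k = real_of_int (v k - u k) * lex_weight M k" for k
  have g: "(\<lambda>j. - (lex_weight M l / 4) * (1/8::real)^j) sums (- (lex_weight M l / 4) * (8/7))"
    using sums_mult[OF geometric_sums[of "1/8::real"], of "- (lex_weight M l / 4)"] by simp
  have bnd: "- (lex_weight M l / 4) * (1/8::real)^j \<le> h (j + Suc l)" for j
  proof -
    have "\<bar>h (j + Suc l)\<bar> \<le> lex_weight M l / 4 * (1/8)^j"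
      unfolding h_def by (rule lex_series_tail_bound[where u=u and v=v and M=M and l=l and j=j, OF u v])
    then show ?thesis by linarith
  qed
  have "(\<Sum>j. - (lex_weight M l / 4) * (1/8::real)^j) \<le> (\<Sum>j. h (j + Suc l))"
  proof (rule suminf_le[OF bnd])
    show "summable (\<lambda>j. - (lex_weight M l / 4) * (1/8::real)^j)" using g by (simp add: sums_iff)
    show "summable (\<lambda>j. h (j + Suc l))" unfolding h_def
      by (rule summable_ignore_initial_segment[OF summable_lex_series_diff[OF u v]])
  qed
  then show ?thesis using sums_unique[OF g] unfolding h_def by simp
qed

lemma lex_series_less:
  fixes u v :: "nat \<Rightarrow> int"
  assumes u: "\<And>k. \<bar>u k\<bar> \<le> int (M k)" and v: "\<And>k. \<bar>v k\<bar> \<le> int (M k)"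
    and eq: "\<And>k. k < l \<Longrightarrow> u k = v k" and less: "u l < v l"
  shows "(\<Sum>k. real_of_int (u k) * lex_weight M k) < (\<Sum>k. real_of_int (v k) * lex_weight M k)"
proof -
  define h where "h k = real_of_int (v k - u k) * lex_weight M k" for k
  have sh: "summable h" unfolding h_def by (rule summable_lex_series_diff[OF u v])
  have "suminf h = (\<Sum>j. h (j + Suc l)) + (\<Sum>i<Suc l. h i)"
    by (rule suminf_split_initial_segment[OF sh])
  moreover have "(\<Sum>i<Suc l. h i) = h l"
  proof -
    have "(\<Sum>i<l. h i) = 0" using eq unfolding h_def by (intro sum.neutral) auto
    then show ?thesis by simp
  qed
  moreover have "h l \<ge> lex_weight M l"
    using less lex_weight_pos[of M l] unfolding h_def by simp
  moreover have "(\<Sum>j. h (j + Suc l)) \<ge> - (lex_weight M l / 4) * (8/7)"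
    unfolding h_def by (rule lex_series_tail_ge[OF u v])
  ultimately have "suminf h > 0" using lex_weight_pos[of M l] by simp
  moreover have "suminf h = (\<Sum>k. real_of_int (v k) * lex_weight M k) - (\<Sum>k. real_of_int (u k) * lex_weight M k)"
    unfolding h_def using suminf_diff[OF summable_lex_series[OF v] summable_lex_series[OF u]]
    by (simp add: algebra_simps)
  ultimately show ?thesis by simp
qed

text \<open>\<open>digit l q\<close>: write \<open>q = r\<^sub>l + I \<cdot> (m\<^bsub>l-1\<^esub> - r\<^sub>l) + e\<close> for the position at level \<open>l\<close> of a point
  with offset \<open>e\<close> in block \<open>I\<close>; in a block \<open>I = 2s+1\<close> the digit is \<open>-q-1\<close> unless \<open>e \<in> s\<close>.\<close>
definition digit :: "nat \<Rightarrow> nat \<Rightarrow> int" where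
  "digit l q = (if l = 0 \<or> q < rT l then int q else
     (if odd ((q - rT l) div (mT (l - 1) - rT l)) \<and>
         (q - rT l) mod (mT (l - 1) - rT l) \<notin> set_decode (((q - rT l) div (mT (l - 1) - rT l)) div 2)
      then - int q - 1 else int q))"

lemma digit_cases: "digit l q = int q \<or> digit l q = - int q - 1"
  unfolding digit_def by auto

lemma digit_inj: "digit l q = digit l q' \<Longrightarrow> q = q'"
  using digit_cases[of l q] digit_cases[of l q'] by auto

lemma abs_digit_le: "q < mT l \<Longrightarrow> \<bar>digit l q\<bar> \<le> int (mT l)"
  using digit_cases[of l q] by auto

lemma digit_block:
  assumes e: "e < mT l - rT (Suc l)"
  shows "digit (Suc l) (rT (Suc l) + I * (mT l - rT (Suc l)) + e) =
    (if odd I \<and> e \<notin> set_decode (I div 2)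
     then - int (rT (Suc l) + I * (mT l - rT (Suc l)) + e) - 1
     else int (rT (Suc l) + I * (mT l - rT (Suc l)) + e))"
proof -
  define d where "d = mT l - rT (Suc l)"
  have "(e + I * d) div d = I" "(e + I * d) mod d = e" using e unfolding d_def by auto
  moreover have "digit (Suc l) q = (if q < rT (Suc l) then int q else
     if odd ((q - rT (Suc l)) div d) \<and> (q - rT (Suc l)) mod d \<notin> set_decode (((q - rT (Suc l)) div d) div 2)
     then - int q - 1 else int q)" for q
    unfolding digit_def d_def by simp
  ultimately show ?thesis unfolding d_def[symmetric] by (simp add: add.commute)
qed

locale entangling_scheme = construction_scheme F mT nT rT for F :: "'a::linorder set set" +
  assumes capturing: "fully_capturing F mT nT rT" and uncountable_UNIV: "uncountable (UNIV::'a set)"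
begin

definition embed :: "'a \<Rightarrow> real" where
  "embed \<alpha> = (\<Sum>k. real_of_int (digit k (normk F mT \<alpha> k)) * lex_weight mT k)"

lemma embed_less:
  "(\<And>k. k < l \<Longrightarrow> normk F mT \<alpha> k = normk F mT \<beta> k) \<Longrightarrow>
   digit l (normk F mT \<alpha> l) < digit l (normk F mT \<beta> l) \<Longrightarrow> embed \<alpha> < embed \<beta>"
  unfolding embed_def by (rule lex_series_less) (auto intro: abs_digit_le normk_less_m)

lemma inj_embed: "inj embed"
proof (rule injI, rule ccontr)
  fix \<alpha> \<beta> assume eq: "embed \<alpha> = embed \<beta>" and ne: "\<alpha> \<noteq> \<beta>"
  define P where "P k \<longleftrightarrow> normk F mT \<alpha> k \<noteq> normk F mT \<beta> k" for k
  define l where "l = (LEAST k. P k)"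
  have "P l" unfolding l_def using LeastI_ex normk_separates[OF ne] P_def by metis
  then have "digit l (normk F mT \<alpha> l) \<noteq> digit l (normk F mT \<beta> l)"
    using digit_inj P_def by blast
  moreover have "normk F mT \<alpha> k = normk F mT \<beta> k" if "k < l" for k
    using not_less_Least[of k P] that P_def l_def by auto
  ultimately have "embed \<alpha> < embed \<beta> \<or> embed \<beta> < embed \<alpha>"
    using embed_less[of l \<alpha> \<beta>] embed_less[of l \<beta> \<alpha>] by (metis linorder_neqE)
  then show False using eq by simp
qed

lemma uncountable_range_embed: "uncountable (range embed)"
  using countable_image_inj_on[of embed UNIV] inj_embed uncountable_UNIV by blast

lemma embed_block_order:
  assumes agree: "\<And>k. k \<le> l \<Longrightarrow> normk F mT \<alpha> k = normk F mT \<beta> k"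
    and e: "e < mT l - rT (Suc l)"
    and \<alpha>: "normk F mT \<alpha> (Suc l) = rT (Suc l) + 2 * s * (mT l - rT (Suc l)) + e"
    and \<beta>: "normk F mT \<beta> (Suc l) = rT (Suc l) + Suc (2 * s) * (mT l - rT (Suc l)) + e"
  shows "e \<in> set_decode s \<Longrightarrow> embed \<alpha> < embed \<beta>" "e \<notin> set_decode s \<Longrightarrow> embed \<beta> < embed \<alpha>"
proof -
  have d\<alpha>: "digit (Suc l) (normk F mT \<alpha> (Suc l)) = int (normk F mT \<alpha> (Suc l))"
    using digit_block[OF e, of "2 * s"] \<alpha> by simp
  have d\<beta>: "digit (Suc l) (normk F mT \<beta> (Suc l)) =
      (if e \<notin> set_decode s then - int (normk F mT \<beta> (Suc l)) - 1 else int (normk F mT \<beta> (Suc l)))"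
    using digit_block[OF e, of "Suc (2 * s)"] \<beta> by simp
  have "normk F mT \<alpha> (Suc l) < normk F mT \<beta> (Suc l)" using \<alpha> \<beta> e by simp
  then show "e \<in> set_decode s \<Longrightarrow> embed \<alpha> < embed \<beta>" "e \<notin> set_decode s \<Longrightarrow> embed \<beta> < embed \<alpha>"
    using embed_less[of "Suc l" \<alpha> \<beta>] embed_less[of "Suc l" \<beta> \<alpha>] agree d\<alpha> d\<beta> by auto
qed

lemma embed_pattern:
  assumes S: "uncountable S" "pairwise disjnt S" "\<And>A. A \<in> S \<Longrightarrow> finite A \<and> card A = k"
    and k: "k > 0" and bounded: "\<And>A \<xi> \<eta>. A \<in> S \<Longrightarrow> \<xi> \<in> A \<Longrightarrow> \<eta> \<in> A \<Longrightarrow> rho F mT \<xi> \<eta> \<le> s"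
  shows "\<exists>A\<in>S. \<exists>B\<in>S. A \<noteq> B \<and>
    (\<forall>j<k. if t j then embed (elt A j) < embed (elt B j) else embed (elt B j) < embed (elt A j))"
proof -
  have "A \<noteq> {} \<and> finite A" if "A \<in> S" for A using S(3)[OF that] k by auto
  then obtain l D where l: "s \<le> l" and D_S: "\<And>i. i < nT (Suc l) \<Longrightarrow> D i \<in> S"
    and D_disj: "\<And>i i'. i < nT (Suc l) \<Longrightarrow> i' < nT (Suc l) \<Longrightarrow> i \<noteq> i' \<Longrightarrow> D i \<inter> D i' = {}"
    and cap: "fully_captured F mT nT rT D (nT (Suc l)) (Suc l)"
    using captured_in_family[OF capturing S(1,2)] by blast
  have "2 \<le> nT (Suc l)" unfolding nT_Suc by simp
  then have D0: "D 0 \<in> S" "D 0 \<inter> D 1 = {}" using D_S D_disj by auto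
  obtain p where p_inj: "inj_on p {..<k}" and p_less: "\<And>j. j < k \<Longrightarrow> p j < mT l - rT (Suc l)"
    and col: "\<And>i j. i < nT (Suc l) \<Longrightarrow> j < k \<Longrightarrow>
      normk F mT (elt (D i) j) (Suc l) = rT (Suc l) + i * (mT l - rT (Suc l)) + p j"
    using captured_offsets[OF cap D0(2)] S(3)[OF D0(1)] bounded[OF D0(1)] l le_trans by blast
  define T where "T = p ` {j. j < k \<and> t j}"
  have T_iff: "p j \<in> T \<longleftrightarrow> t j" if "j < k" for j
    using inj_onD[OF p_inj] that unfolding T_def by auto
  have "T \<subseteq> {..<mT l}" unfolding T_def using p_less by fastforce
  then have N_gt: "Suc (2 * set_encode T) < nT (Suc l)" by (rule odd_block_fits)
  define A B where "A = D (2 * set_encode T)" and "B = D (Suc (2 * set_encode T))"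
  have AB: "A \<in> S" "B \<in> S" "A \<inter> B = {}" using D_S D_disj N_gt unfolding A_def B_def by auto
  have "A \<noteq> B" using AB S(3)[of A] k by fastforce
  moreover have "if t j then embed (elt A j) < embed (elt B j) else embed (elt B j) < embed (elt A j)"
    if j: "j < k" for j
  proof -
    have agree: "normk F mT (elt A j) k' = normk F mT (elt B j) k'" if "k' \<le> l" for k'
      using captured_agree[OF cap D0(2)] N_gt j S(3)[OF D0(1)] that unfolding A_def B_def by auto
    have nA: "normk F mT (elt A j) (Suc l) = rT (Suc l) + 2 * set_encode T * (mT l - rT (Suc l)) + p j"
      using col[of "2 * set_encode T" j] N_gt j unfolding A_def by simp
    have nB: "normk F mT (elt B j) (Suc l) = rT (Suc l) + Suc (2 * set_encode T) * (mT l - rT (Suc l)) + p j"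
      using col[OF N_gt j] unfolding B_def .
    have "finite T" unfolding T_def by simp
    then show ?thesis using embed_block_order[OF agree p_less[OF j] nA nB] T_iff[OF j] by simp
  qed
  ultimately show ?thesis using AB by blast
qed

lemma embed_preimage:
  assumes "a \<subseteq> range embed" "finite a"
  shows "embed ` (embed -` a) = a" "finite (embed -` a)" "card (embed -` a) = card a"
proof -
  show "embed ` (embed -` a) = a" using assms(1) by (simp add: image_vimage_eq Int_absorb2)
  show "finite (embed -` a)" using assms(2) inj_embed by (rule finite_vimageI)
  show "card (embed -` a) = card a" using assms(1) card_vimage_inj[OF inj_embed] by simp
qed

lemma uniform_subfamily:
  assumes unc: "uncountable \<A>" and \<A>: "\<And>a. a \<in> \<A> \<Longrightarrow> a \<subseteq> range embed \<and> finite a \<and> card a = k"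
  obtains \<A>' \<pi> s where "\<A>' \<subseteq> \<A>" "uncountable \<A>'" "\<pi> ` {..<k} = {..<k}"
    "\<And>a j. a \<in> \<A>' \<Longrightarrow> j < k \<Longrightarrow> elt a (\<pi> j) = embed (elt (embed -` a) j)"
    "\<And>a \<xi> \<eta>. a \<in> \<A>' \<Longrightarrow> \<xi> \<in> embed -` a \<Longrightarrow> \<eta> \<in> embed -` a \<Longrightarrow> rho F mT \<xi> \<eta> \<le> s"
proof -
  define \<pi> where "\<pi> a = (SOME \<pi>. \<pi> ` {..<k} = {..<k} \<and> (\<forall>j<k. elt a (\<pi> j) = embed (elt (embed -` a) j)))"
    for a
  have pre: "embed ` (embed -` a) = a" "finite (embed -` a)" "card (embed -` a) = k" if "a \<in> \<A>" for a
    using embed_preimage \<A>[OF that] by auto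
  have \<pi>: "\<pi> a ` {..<k} = {..<k} \<and> (\<forall>j<k. elt a (\<pi> a j) = embed (elt (embed -` a) j))"
    if a: "a \<in> \<A>" for a
  proof -
    have "\<exists>\<pi>'. \<pi>' ` {..<k} = {..<k} \<and> (\<forall>j<k. elt a (\<pi>' j) = embed (elt (embed -` a) j))"
      using elt_image_perm[OF inj_embed pre(2)[OF a]] pre[OF a] by metis
    then show ?thesis unfolding \<pi>_def by (rule someI_ex)
  qed
  define bound where "bound a = Max (case_prod (rho F mT) ` (embed -` a \<times> embed -` a))" for a
  have bound: "rho F mT \<xi> \<eta> \<le> bound a" if "a \<in> \<A>" "\<xi> \<in> embed -` a" "\<eta> \<in> embed -` a" for a \<xi> \<eta>
  proof -
    have "finite (case_prod (rho F mT) ` (embed -` a \<times> embed -` a))" using pre(2)[OF that(1)] by simp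
    moreover have "rho F mT \<xi> \<eta> \<in> case_prod (rho F mT) ` (embed -` a \<times> embed -` a)"
      using that(2,3) by force
    ultimately show ?thesis unfolding bound_def by (rule Max_ge)
  qed
  define key where "key a = (map (\<pi> a) [0..<k], bound a)" for a
  obtain \<kappa> where \<kappa>: "uncountable {a\<in>\<A>. key a = \<kappa>}"
    using uncountable_fibre[OF unc] by blast
  then have "{a\<in>\<A>. key a = \<kappa>} \<noteq> {}" by (metis countable_empty)
  then obtain a0 where a0: "a0 \<in> \<A>" "key a0 = \<kappa>" by blast
  have same_\<pi>: "\<pi> a j = \<pi> a0 j" if "key a = \<kappa>" "j < k" for a j
    using that a0(2) map_eq_conv[of "\<pi> a" "[0..<k]" "\<pi> a0"] unfolding key_def by auto
  have same_bound: "bound a = bound a0" if "key a = \<kappa>" for a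
    using that a0(2) unfolding key_def by auto
  show ?thesis
  proof (rule that[OF _ \<kappa>, of "\<pi> a0" "bound a0"])
    show "\<pi> a0 ` {..<k} = {..<k}" using \<pi>[OF a0(1)] by simp
    fix a j assume a: "a \<in> {a\<in>\<A>. key a = \<kappa>}" and j: "j < k"
    then have "elt a (\<pi> a j) = embed (elt (embed -` a) j)" using \<pi>[of a] by blast
    then show "elt a (\<pi> a0 j) = embed (elt (embed -` a) j)" using same_\<pi>[of a j] a j by simp
  next
    fix a \<xi> \<eta> assume "a \<in> {a\<in>\<A>. key a = \<kappa>}" "\<xi> \<in> embed -` a" "\<eta> \<in> embed -` a"
    then show "rho F mT \<xi> \<eta> \<le> bound a0" using bound[of a \<xi> \<eta>] same_bound[of a] by auto
  qed simp
qed

lemma k_entangled_range_embed: "k_entangled k (range embed)"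
  unfolding k_entangled_def
proof (intro conjI allI impI)
  show "uncountable (range embed)" by (rule uncountable_range_embed)
  fix \<A> :: "real set set" and t :: "nat \<Rightarrow> bool"
  assume "\<A> \<subseteq> {a. a \<subseteq> range embed \<and> finite a \<and> card a = k} \<and> uncountable \<A> \<and> pairwise disjnt \<A>"
  then have \<A>: "\<And>a. a \<in> \<A> \<Longrightarrow> a \<subseteq> range embed \<and> finite a \<and> card a = k"
    and unc: "uncountable \<A>" and disj: "pairwise disjnt \<A>" by auto
  obtain \<A>' \<pi> s where \<A>': "\<A>' \<subseteq> \<A>" "uncountable \<A>'" "\<pi> ` {..<k} = {..<k}"
    and \<pi>: "\<And>a j. a \<in> \<A>' \<Longrightarrow> j < k \<Longrightarrow> elt a (\<pi> j) = embed (elt (embed -` a) j)"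
    and bounded: "\<And>a \<xi> \<eta>. a \<in> \<A>' \<Longrightarrow> \<xi> \<in> embed -` a \<Longrightarrow> \<eta> \<in> embed -` a \<Longrightarrow> rho F mT \<xi> \<eta> \<le> s"
    using uniform_subfamily[OF unc \<A>] by blast
  have pre: "finite (embed -` a) \<and> card (embed -` a) = k" if "a \<in> \<A>" for a
    using embed_preimage(2,3) \<A>[OF that] by auto
  have "k > 0" using uncountable_family_card_pos[OF unc] \<A> by blast
  define S where "S = (\<lambda>a. embed -` a) ` \<A>'"
  have S_unc: "uncountable S"
    unfolding S_def using \<A>'(2) by (rule uncountable_vimage_family) (use \<A>'(1) \<A> in blast)
  have S_disj: "pairwise disjnt S"
    unfolding S_def using pairwise_subset[OF disj \<A>'(1)] by (rule pairwise_disjnt_vimage_family)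
  have S_elem: "\<exists>a\<in>\<A>'. A = embed -` a" if "A \<in> S" for A using that unfolding S_def by blast
  have S_card: "finite A \<and> card A = k" if "A \<in> S" for A
    using S_elem[OF that] pre \<A>'(1) by blast
  have S_bounded: "rho F mT \<xi> \<eta> \<le> s" if "A \<in> S" "\<xi> \<in> A" "\<eta> \<in> A" for A \<xi> \<eta>
    using S_elem[OF that(1)] bounded that(2,3) by blast
  have "\<exists>A\<in>S. \<exists>B\<in>S. A \<noteq> B \<and>
      (\<forall>j<k. if (t \<circ> \<pi>) j then embed (elt A j) < embed (elt B j) else embed (elt B j) < embed (elt A j))"
    by (rule embed_pattern) (use S_unc S_disj S_card \<open>k > 0\<close> S_bounded in auto)
  then obtain A B where AB: "A \<in> S" "B \<in> S" "A \<noteq> B"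
    and order: "\<forall>j<k. if (t \<circ> \<pi>) j then embed (elt A j) < embed (elt B j)
                                     else embed (elt B j) < embed (elt A j)"
    by blast
  obtain a b where ab: "a \<in> \<A>'" "b \<in> \<A>'" "A = embed -` a" "B = embed -` b"
    using S_elem[OF AB(1)] S_elem[OF AB(2)] by blast
  have "a \<noteq> b" using AB(3) ab(3,4) by blast
  moreover have "if t i then elt a i < elt b i else elt a i > elt b i" if i: "i < k" for i
  proof -
    obtain j where j: "j < k" "\<pi> j = i" using i \<A>'(3) by (metis imageE lessThan_iff)
    have "elt a i = embed (elt A j)" "elt b i = embed (elt B j)"
      using \<pi>[OF ab(1) j(1)] \<pi>[OF ab(2) j(1)] ab(3,4) j(2) by simp_all
    then show ?thesis using order j by simp
  qed
  ultimately show "\<exists>a\<in>\<A>. \<exists>b\<in>\<A>. a \<noteq> b \<and> (\<forall>i<k. if t i then elt a i < elt b i else elt a i > elt b i)"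
    using ab(1,2) \<A>'(1) by blast
qed

end

theorem mainTheorem14:
  assumes "is_omega1 TYPE('a::wellorder)"
    and "FCA_Delta TYPE('a)"
  shows "\<exists>E :: real set. uncountable E \<and> (\<forall>k. k_entangled k E)"
proof -
  have unc: "uncountable (UNIV::'a set)" using assms(1) unfolding is_omega1_def by simp
  obtain F :: "'a set set" where "scheme F mT nT rT UNIV" "fully_capturing F mT nT rT"
    using assms(2) good_type_T unfolding FCA_Delta_def by blast
  then interpret entangling_scheme F
    using is_type_T unc countable_finite by unfold_locales auto
  show ?thesis using uncountable_range_embed k_entangled_range_embed by blast
qed

end
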